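(* For every $Q\subset\mathrm{EX}(M)$, the space $Q(M)$ is separable.
   Context: Conventions: $M$ is an $n$-dimensional smooth manifold (Hausdorff, second countable) with maximal $C^\infty$ atlas $\mathcal{A}(M)$; every chart $\alpha$ has open domain $\mathrm{dom}(\alpha)\subset M$ and open range $\mathrm{ran}(\alpha)\subset\mathbb{R}^n$. For $A\subset\mathbb{R}^n$, $\partial A$ is its boundary in $\mathbb{R}^n$; for $A\subset U\subset\mathbb{R}^n$, $\partial_U A$ is the boundary of $A$ relative to $U$. An admissible boundary point of $\alpha$ is a $p\in\partial\,\mathrm{ran}(\alpha)$ such that every sequence $(x_i)\subset\mathrm{dom}(\alpha)$ with $\alpha(x_i)\to p$ has no accumulation point in $M$; $B(\alpha)$ is the set of these. An extension is a pair $(\alpha,U)$, $U\subset\mathbb{R}^n$ open, $\mathrm{ran}(\alpha)\subset U$, $\emptyset\ne\partial_U\mathrm{ran}(\alpha)\subset B(\alpha)$; $\mathrm{EX}(M)$ is the set of extensions. A boundary set is $(\alpha,U,V)$ with $(\alpha,U)\in\mathrm{EX}(M)$, $V\subset B(\alpha)\cap U$ (a boundary point if $V=\{p\}$). $(\alpha,U,V)$ covers $(\beta,X,Y)$ if for every sequence $(y_i)\subset\mathrm{dom}(\beta)$ with $(\beta(y_i))$ having an accumulation point in $Y$ there is a subsequence $(v_i)\subset\mathrm{dom}(\alpha)$ of $(y_i)$ with $(\alpha(v_i))$ having an accumulation point in $V$; they are equivalent, $\equiv$, if each covers the other. Completion: for $Q\subset\mathrm{EX}(M)$ let $P=\{(\alpha,\mathrm{ran}(\alpha)):\alpha\in\mathcal{A}(M)\}$,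 $S_Q=P\cup Q$, $N_{(\alpha,U)}=\mathrm{ran}(\alpha)\cup\partial_U\mathrm{ran}(\alpha)$ with subspace topology of $\mathbb{R}^n$, $N_Q=\bigsqcup_{(\alpha,U)\in S_Q}N_{(\alpha,U)}$ with disjoint-union topology. Identify $x\in N_{(\alpha,U)}$ with $y\in N_{(\beta,X)}$ iff either $x\in\mathrm{ran}(\alpha)$, $y\in\mathrm{ran}(\beta)$, $\beta\circ\alpha^{-1}(x)=y$, or $x\in\partial_U\mathrm{ran}(\alpha)$, $y\in\partial_X\mathrm{ran}(\beta)$, $(\alpha,U,\{x\})\equiv(\beta,X,\{y\})$. $Q(M)$ is the quotient space with the quotient topology and $q:N_Q\to Q(M)$ the quotient map. *)

theory Defs
  imports "HOL-Analysis.Analysis"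
begin

text \<open>The derivative is required to have C^(k-1) directional components, i.e. x maps to f' x v
  is C^(k-1) for each fixed v (equivalently the derivative is C^(k-1) in finite dimensions).\<close>
fun Ck :: "nat \<Rightarrow> 'a::real_normed_vector set \<Rightarrow> ('a \<Rightarrow> 'b::real_normed_vector) \<Rightarrow> bool" where
  "Ck 0 S f = continuous_on S f"
| "Ck (Suc k) S f =
     (\<exists>f'. (\<forall>x\<in>S. (f has_derivative f' x) (at x)) \<and> (\<forall>v. Ck k S (\<lambda>x. f' x v)))"

definition smooth_on :: "'a::real_normed_vector set \<Rightarrow> ('a \<Rightarrow> 'b::real_normed_vector) \<Rightarrow> bool" where
  "smooth_on S f \<longleftrightarrow> (\<forall>k. Ck k S f)"

text \<open>A chart on the topological space T with values in R^n (n = CARD('n)) is a pair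
  (domain, map).\<close>
type_synonym ('a, 'n) chart = "'a set \<times> ('a \<Rightarrow> real^'n)"

definition cdom :: "('a, 'n::finite) chart \<Rightarrow> 'a set" where
  "cdom c = fst c"

definition cran :: "('a, 'n::finite) chart \<Rightarrow> (real^'n) set" where
  "cran c = snd c ` fst c"

definition cinv :: "('a, 'n::finite) chart \<Rightarrow> real^'n \<Rightarrow> 'a" where
  "cinv c = inv_into (fst c) (snd c)"

definition is_chart :: "'a topology \<Rightarrow> ('a, 'n::finite) chart \<Rightarrow> bool" where
  "is_chart T c \<longleftrightarrow> openin T (cdom c) \<and> open (cran c) \<and>
     homeomorphic_map (subtopology T (cdom c)) (subtopology euclidean (cran c)) (snd c)"

definition smooth_compat :: "('a, 'n::finite) chart \<Rightarrow> ('a, 'n) chart \<Rightarrow> bool" where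
  "smooth_compat c d \<longleftrightarrow>
     smooth_on (snd c ` (cdom c \<inter> cdom d)) (snd d \<circ> cinv c) \<and>
     smooth_on (snd d ` (cdom c \<inter> cdom d)) (snd c \<circ> cinv d)"

definition smooth_atlas :: "'a topology \<Rightarrow> ('a, 'n::finite) chart set \<Rightarrow> bool" where
  "smooth_atlas T Atl \<longleftrightarrow> (\<forall>c\<in>Atl. is_chart T c) \<and> \<Union>(cdom ` Atl) = topspace T \<and>
     (\<forall>c\<in>Atl. \<forall>d\<in>Atl. smooth_compat c d)"

definition smooth_manifold :: "'a topology \<Rightarrow> ('a, 'n::finite) chart set \<Rightarrow> bool" where
  "smooth_manifold T Atl \<longleftrightarrow> Hausdorff_space T \<and> second_countable T \<and> smooth_atlas T Atl"

definition max_atlas :: "'a topology \<Rightarrow> ('a, 'n::finite) chart set \<Rightarrow> ('a, 'n) chart set" where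
  "max_atlas T Atl = {c. is_chart T c \<and> (\<forall>d\<in>Atl. smooth_compat c d)}"

definition seq_acc :: "'a topology \<Rightarrow> (nat \<Rightarrow> 'a) \<Rightarrow> 'a \<Rightarrow> bool" where
  "seq_acc T x p \<longleftrightarrow> p \<in> topspace T \<and>
     (\<forall>U. openin T U \<and> p \<in> U \<longrightarrow> infinite {i. x i \<in> U})"

definition admissible_bd :: "'a topology \<Rightarrow> ('a, 'n::finite) chart \<Rightarrow> real^'n \<Rightarrow> bool" where
  "admissible_bd T c p \<longleftrightarrow> p \<in> frontier (cran c) \<and>
     (\<forall>x. (\<forall>i. x i \<in> cdom c) \<and> ((\<lambda>i. snd c (x i)) \<longlonglongrightarrow> p) \<longrightarrow> \<not> (\<exists>m. seq_acc T x m))"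

definition Bset :: "'a topology \<Rightarrow> ('a, 'n::finite) chart \<Rightarrow> (real^'n) set" where
  "Bset T c = {p. admissible_bd T c p}"

definition rel_bd :: "(real^'n::finite) set \<Rightarrow> (real^'n) set \<Rightarrow> (real^'n) set" where
  "rel_bd U A = (subtopology euclidean U) frontier_of A"

definition EXT :: "'a topology \<Rightarrow> ('a, 'n::finite) chart set \<Rightarrow> (('a, 'n) chart \<times> (real^'n) set) set" where
  "EXT T Atl = {(c, U). c \<in> max_atlas T Atl \<and> open U \<and> cran c \<subseteq> U \<and>
      rel_bd U (cran c) \<noteq> {} \<and> rel_bd U (cran c) \<subseteq> Bset T c}"

definition covers :: "('a, 'n::finite) chart \<times> (real^'n) set \<times> (real^'n) set \<Rightarrow>
    ('a, 'n) chart \<times> (real^'n) set \<times> (real^'n) set \<Rightarrow> bool" where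
  "covers A B \<longleftrightarrow> (case A of (c, U, V) \<Rightarrow> case B of (d, W, Y) \<Rightarrow>
     (\<forall>y. (\<forall>i. y i \<in> cdom d) \<and> (\<exists>p\<in>Y. seq_acc euclidean (\<lambda>i. snd d (y i)) p) \<longrightarrow>
        (\<exists>r. strict_mono r \<and> (\<forall>i. y (r i) \<in> cdom c) \<and>
             (\<exists>q\<in>V. seq_acc euclidean (\<lambda>i. snd c (y (r i))) q))))"

definition bs_equiv :: "('a, 'n::finite) chart \<times> (real^'n) set \<times> (real^'n) set \<Rightarrow>
    ('a, 'n) chart \<times> (real^'n) set \<times> (real^'n) set \<Rightarrow> bool" where
  "bs_equiv A B \<longleftrightarrow> covers A B \<and> covers B A"

definition SQ :: "'a topology \<Rightarrow> ('a, 'n::finite) chart set \<Rightarrow> (('a, 'n) chart \<times> (real^'n) set) set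
    \<Rightarrow> (('a, 'n) chart \<times> (real^'n) set) set" where
  "SQ T Atl Q = {(c, cran c) | c. c \<in> max_atlas T Atl} \<union> Q"

definition Nfib :: "('a, 'n::finite) chart \<times> (real^'n) set \<Rightarrow> (real^'n) set" where
  "Nfib s = (case s of (c, U) \<Rightarrow> cran c \<union> rel_bd U (cran c))"

definition NQ :: "'a topology \<Rightarrow> ('a, 'n::finite) chart set \<Rightarrow> (('a, 'n) chart \<times> (real^'n) set) set
    \<Rightarrow> ((('a, 'n) chart \<times> (real^'n) set) \<times> (real^'n)) topology" where
  "NQ T Atl Q = sum_topology (\<lambda>s. subtopology euclidean (Nfib s)) (SQ T Atl Q)"

definition ident :: "'a topology \<Rightarrow> ('a, 'n::finite) chart set \<Rightarrow> (('a, 'n) chart \<times> (real^'n) set) set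
    \<Rightarrow> (((('a, 'n) chart \<times> (real^'n) set) \<times> (real^'n)) \<times> ((('a, 'n) chart \<times> (real^'n) set) \<times> (real^'n))) set" where
  "ident T Atl Q = {(((c, U), x), ((d, W), y)).
      (c, U) \<in> SQ T Atl Q \<and> (d, W) \<in> SQ T Atl Q \<and> x \<in> Nfib (c, U) \<and> y \<in> Nfib (d, W) \<and>
      ((x \<in> cran c \<and> y \<in> cran d \<and> cinv c x \<in> cdom d \<and> snd d (cinv c x) = y) \<or>
       (x \<in> rel_bd U (cran c) \<and> y \<in> rel_bd W (cran d) \<and> bs_equiv (c, U, {x}) (d, W, {y})))}"

definition quotient_topology :: "'b topology \<Rightarrow> ('b \<times> 'b) set \<Rightarrow> 'b set topology" where
  "quotient_topology X E = topology (\<lambda>U. U \<subseteq> topspace X // E \<and>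
      openin X {x \<in> topspace X. E `` {x} \<in> U})"

lemma istopology_quotient_topology:
  "istopology (\<lambda>U. U \<subseteq> topspace X // E \<and> openin X {x \<in> topspace X. E `` {x} \<in> U})"
proof -
  have 1: "{x \<in> topspace X. E `` {x} \<in> S \<inter> T} =
      {x \<in> topspace X. E `` {x} \<in> S} \<inter> {x \<in> topspace X. E `` {x} \<in> T}" for S T by auto
  have 2: "{x \<in> topspace X. E `` {x} \<in> \<Union>K} = (\<Union>S\<in>K. {x \<in> topspace X. E `` {x} \<in> S})" for K by auto
  show ?thesis unfolding istopology_def 1 2 by auto
qed

definition QM :: "'a topology \<Rightarrow> ('a, 'n::finite) chart set \<Rightarrow> (('a, 'n) chart \<times> (real^'n) set) set
    \<Rightarrow> ((('a, 'n) chart \<times> (real^'n) set) \<times> (real^'n)) set topology" where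
  "QM T Atl Q = quotient_topology (NQ T Atl Q) ((ident T Atl Q \<union> (ident T Atl Q)\<inverse>)\<^sup>*)"

end

theory Submission
  imports Defs
begin

text \<open>A second countable manifold M has a countable dense set C. In every fibre
  N_(c,U) of N_Q the chart image of C is dense: it is dense in ran c because c is a
  homeomorphism onto ran c, and ran c is dense in N_(c,U) because the added points are
  boundary points of ran c. So the points of C, read in all charts, form a dense subset
  of N_Q, and its image in Q(M) is dense. That image is countable, since a point of M
  read in any chart is identified with the same point read in one fixed chart.\<close>

lemma openin_quotient_topology:
  "openin (quotient_topology X E) W \<longleftrightarrow>
     W \<subseteq> topspace X // E \<and> openin X {x \<in> topspace X. E `` {x} \<in> W}"
  unfolding quotient_topology_def
  by (subst topology_inverse'[OF istopology_quotient_topology]) (rule refl)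

lemma topspace_quotient_topology: "topspace (quotient_topology X E) = topspace X // E"
proof -
  have "{x \<in> topspace X. E `` {x} \<in> topspace X // E} = topspace X"
    by (auto simp: quotient_def)
  then have "openin (quotient_topology X E) (topspace X // E)"
    by (simp add: openin_quotient_topology)
  then have "topspace X // E \<subseteq> topspace (quotient_topology X E)"
    by (simp add: openin_subset)
  moreover have "topspace (quotient_topology X E) \<subseteq> topspace X // E"
    using openin_quotient_topology[of X E "topspace (quotient_topology X E)"] by simp
  ultimately show ?thesis by blast
qed

lemma continuous_map_quotient_class:
  "continuous_map X (quotient_topology X E) (\<lambda>x. E `` {x})"
  unfolding continuous_map_def topspace_quotient_topology
  by (auto simp: quotient_def openin_quotient_topology)

lemma separable_space_quotient_topology:
  assumes "countable S" "S \<subseteq> topspace X" "X closure_of D = topspace X"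
    and "\<And>x. x \<in> D \<Longrightarrow> \<exists>s\<in>S. (x, s) \<in> E"
    and "sym E" "trans E"
  shows "separable_space (quotient_topology X E)"
proof -
  let ?q = "\<lambda>x. E `` {x}"
  have "?q ` D \<subseteq> ?q ` S"
  proof
    fix y assume "y \<in> ?q ` D"
    then obtain x s where "y = ?q x" "s \<in> S" "(x, s) \<in> E"
      using assms(4) by blast
    then have "y = ?q s"
      using assms(5,6) by (auto dest: symD transD)
    with \<open>s \<in> S\<close> show "y \<in> ?q ` S" by blast
  qed
  have "topspace (quotient_topology X E) = ?q ` (X closure_of D)"
    by (auto simp: topspace_quotient_topology assms(3) quotient_def)
  also have "\<dots> \<subseteq> quotient_topology X E closure_of (?q ` D)"
    by (rule continuous_map_image_closure_subset[OF continuous_map_quotient_class])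
  also have "\<dots> \<subseteq> quotient_topology X E closure_of (?q ` S)"
    using \<open>?q ` D \<subseteq> ?q ` S\<close> by (rule closure_of_mono)
  finally have "quotient_topology X E closure_of (?q ` S) = topspace (quotient_topology X E)"
    by (simp add: closure_of_subset_topspace subset_antisym)
  moreover have "?q ` S \<subseteq> topspace (quotient_topology X E)"
    using assms(2) by (auto simp: topspace_quotient_topology quotient_def)
  ultimately show ?thesis
    unfolding separable_space_def using assms(1) by blast
qed

lemma sum_topology_closure_of_Sigma:
  assumes "\<And>i. i \<in> I \<Longrightarrow> X i closure_of D i = topspace (X i)"
  shows "sum_topology X I closure_of Sigma I D = topspace (sum_topology X I)"
proof (rule subset_antisym[OF closure_of_subset_topspace], rule subsetI)
  fix z assume "z \<in> topspace (sum_topology X I)"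
  then obtain i x where z: "z = (i, x)" "i \<in> I" "x \<in> topspace (X i)" by auto
  have "Pair i ` (X i closure_of D i) \<subseteq> sum_topology X I closure_of (Pair i ` D i)"
    using continuous_map_component_injection[OF \<open>i \<in> I\<close>]
    by (rule continuous_map_image_closure_subset)
  also have "\<dots> \<subseteq> sum_topology X I closure_of Sigma I D"
    using \<open>i \<in> I\<close> by (intro closure_of_mono) auto
  finally show "z \<in> sum_topology X I closure_of Sigma I D"
    using z assms by blast
qed

lemma cinv_chart:
  assumes "is_chart T c" "m \<in> cdom c"
  shows "cinv c (snd c m) = m"
proof -
  have "openin T (cdom c)"
    and hm: "homeomorphic_map (subtopology T (cdom c)) (subtopology euclidean (cran c)) (snd c)"
    using assms(1) by (auto simp: is_chart_def)
  then have "inj_on (snd c) (cdom c)"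
    using homeomorphic_imp_injective_map[OF hm] by (simp add: openin_subset inf_absorb2)
  then show ?thesis
    using assms(2) by (simp add: cinv_def cdom_def)
qed

lemma chart_image_dense:
  assumes "is_chart T c" "T closure_of C = topspace T"
  shows "cran c \<subseteq> closure (snd c ` (C \<inter> cdom c))"
proof -
  have opn: "openin T (cdom c)"
    and hm: "homeomorphic_map (subtopology T (cdom c)) (subtopology euclidean (cran c)) (snd c)"
    using assms(1) by (auto simp: is_chart_def)
  have "cdom c \<subseteq> cdom c \<inter> T closure_of C"
    using assms(2) opn by (simp add: openin_subset)
  also have "\<dots> \<subseteq> T closure_of (C \<inter> cdom c)"
    using openin_Int_closure_of_subset[OF opn] by (simp add: Int_commute)
  finally have "cdom c \<subseteq> subtopology T (cdom c) closure_of (C \<inter> cdom c)"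
    by (simp add: closure_of_subtopology_open[OF disjI1, OF opn])
  then have "cran c \<subseteq> snd c ` (subtopology T (cdom c) closure_of (C \<inter> cdom c))"
    by (auto simp: cran_def cdom_def)
  also have "\<dots> \<subseteq> subtopology euclidean (cran c) closure_of (snd c ` (C \<inter> cdom c))"
    using homeomorphic_imp_continuous_map[OF hm] by (rule continuous_map_image_closure_subset)
  also have "\<dots> \<subseteq> closure (snd c ` (C \<inter> cdom c))"
    using closure_of_subtopology_subset by fastforce
  finally show ?thesis .
qed

lemma Nfib_subset_closure: "Nfib (c, U) \<subseteq> closure (cran c)"
proof -
  have "rel_bd U (cran c) \<subseteq> subtopology euclidean U closure_of cran c"
    by (auto simp: rel_bd_def frontier_of_def)
  also have "\<dots> \<subseteq> closure (cran c)"
    using closure_of_subtopology_subset by fastforce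
  finally show ?thesis
    by (auto simp: Nfib_def closure_subset[THEN subsetD])
qed

lemma Nfib_closure_of_chart_image:
  assumes "is_chart T c" "T closure_of C = topspace T"
  shows "subtopology euclidean (Nfib (c, U)) closure_of (snd c ` (C \<inter> cdom c)) = Nfib (c, U)"
proof -
  have sub: "snd c ` (C \<inter> cdom c) \<subseteq> Nfib (c, U)"
    by (auto simp: Nfib_def cran_def cdom_def)
  have "Nfib (c, U) \<subseteq> closure (cran c)" by (rule Nfib_subset_closure)
  also have "\<dots> \<subseteq> closure (snd c ` (C \<inter> cdom c))"
    using chart_image_dense[OF assms] by (metis closure_closure closure_mono)
  finally show ?thesis
    using sub by (auto simp: closure_of_subtopology Int_absorb1)
qed

lemma SQ_is_chart:
  assumes "Q \<subseteq> EXT T Atl" "(c, U) \<in> SQ T Atl Q"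
  shows "is_chart T c"
  using assms by (auto simp: SQ_def EXT_def max_atlas_def)

lemma ident_chart_coordinates:
  assumes "(c, U) \<in> SQ T Atl Q" "(d, W) \<in> SQ T Atl Q" "is_chart T c"
    and "m \<in> cdom c" "m \<in> cdom d"
  shows "(((c, U), snd c m), ((d, W), snd d m)) \<in> ident T Atl Q"
  using assms cinv_chart[OF assms(3,4)]
  by (auto simp: ident_def Nfib_def cran_def cdom_def)

lemma NQ_closure_of_chart_images:
  assumes "Q \<subseteq> EXT T Atl" "T closure_of C = topspace T"
  shows "NQ T Atl Q closure_of Sigma (SQ T Atl Q) (\<lambda>(c, U). snd c ` (C \<inter> cdom c))
    = topspace (NQ T Atl Q)"
  unfolding NQ_def
  by (rule sum_topology_closure_of_Sigma)
    (use Nfib_closure_of_chart_image[OF SQ_is_chart[OF assms(1)] assms(2)] in auto)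

lemma SQ_atlas_chart:
  assumes "smooth_atlas T Atl" "m \<in> topspace T"
  obtains c where "(c, cran c) \<in> SQ T Atl Q" "m \<in> cdom c"
proof -
  obtain c where "c \<in> Atl" "m \<in> cdom c"
    using assms unfolding smooth_atlas_def by blast
  then have "c \<in> max_atlas T Atl"
    using assms(1) by (auto simp: smooth_atlas_def max_atlas_def)
  then show thesis
    using that \<open>m \<in> cdom c\<close> unfolding SQ_def by blast
qed

theorem mainTheorem19:
  fixes T :: "'a topology" and Atl :: "('a, 'n::finite) chart set"
    and Q :: "(('a, 'n) chart \<times> (real^'n) set) set"
  assumes "smooth_manifold T Atl"
    and "Q \<subseteq> EXT T Atl"
  shows "separable_space (QM T Atl Q)"
proof -
  have atlas: "smooth_atlas T Atl" and "second_countable T"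
    using assms(1) by (auto simp: smooth_manifold_def)
  obtain C where C: "countable C" "C \<subseteq> topspace T" "T closure_of C = topspace T"
    using second_countable_imp_separable_space[OF \<open>second_countable T\<close>]
    unfolding separable_space_def by blast
  have "\<forall>m\<in>topspace T. \<exists>c. (c, cran c) \<in> SQ T Atl Q \<and> m \<in> cdom c"
    using SQ_atlas_chart[OF atlas] by metis
  then obtain ch where ch: "\<And>m. m \<in> topspace T \<Longrightarrow>
      (ch m, cran (ch m)) \<in> SQ T Atl Q \<and> m \<in> cdom (ch m)"
    by metis
  define pt where "pt m = ((ch m, cran (ch m)), snd (ch m) m)" for m
  let ?E = "(ident T Atl Q \<union> (ident T Atl Q)\<inverse>)\<^sup>*"
  show ?thesis
    unfolding QM_def
  proof (rule separable_space_quotient_topology[OF _ _ NQ_closure_of_chart_images[OF assms(2) C(3)]])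
    show "countable (pt ` C)" using C(1) by simp
    show "pt ` C \<subseteq> topspace (NQ T Atl Q)"
      using C(2) ch by (fastforce simp: NQ_def pt_def Nfib_def cran_def cdom_def)
    show "\<exists>s\<in>pt ` C. (x, s) \<in> ?E"
      if D: "x \<in> Sigma (SQ T Atl Q) (\<lambda>(c, U). snd c ` (C \<inter> cdom c))" for x
    proof -
      obtain c U m where x: "x = ((c, U), snd c m)" "(c, U) \<in> SQ T Atl Q" "m \<in> C" "m \<in> cdom c"
        using D by auto
      have "(x, pt m) \<in> ident T Atl Q"
        unfolding x(1) pt_def using x C(2) ch SQ_is_chart[OF assms(2)]
        by (intro ident_chart_coordinates) auto
      then show ?thesis using \<open>m \<in> C\<close> by blast
    qed
    show "sym ?E" by (intro sym_rtrancl) (auto simp: sym_def)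
    show "trans ?E" by (rule trans_rtrancl)
  qed
qed

end
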